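(* Let $\mathcal I$ be a chore allocation instance with two agents $N=\{1,2\}$, labelled so that $s_1\le s_2$, and let $\langle X_1,X_2\rangle$ be the output of Algorithm $\mathsf{DivCho}$ on $\mathcal I$. Then for each $i\in\{1,2\}$, $V_i(X_i)\ge\frac32\mathsf{WMMS}_i(\mathcal I)\ge\frac32\mathsf{OWMMS}_i(\mathcal I)$.
   Context: A chore allocation instance: agents $N$, chores $M$, additive valuations $V_i$ with $V_i(\{j\})\le0$ and $V_i(M)=-1$, shares $s_i\in(0,1]$ with $\sum_is_i=1$. An allocation is an ordered partition of $M$ into $|N|$ possibly empty bundles. $\mathsf{WMMS}_i(\mathcal I):=\max_{\langle Y_1,\dots,Y_n\rangle}\min_{k\in N}V_i(Y_k)\frac{s_i}{s_k}$ over all allocations; a partition attaining this maximum is a P-$i$ partition. The OWMMS ratio $\alpha^*$ is the minimal $\alpha\ge1$ such that some allocation has $V_i(X_i)\ge\alpha\,\mathsf{WMMS}_i(\mathcal I)$ for all $i$, and $\mathsf{OWMMS}_i(\mathcal I):=\alpha^*\mathsf{WMMS}_i(\mathcal I)$. Algorithm $\mathsf{DivCho}$ (with $s_1\le s_2$): if $s_1\le\frac13$ and $s_2\ge\frac23$, output $X_1=\emptyset$, $X_2=M$. Otherwise, agent 2 partitions $M$ into $\langle A_1,A_2\rangle$ according to a P-2 partition; agent 1 chooses the bundle among $A_1,A_2$ of highest value $V_1$, which becomes $X_1$, and the other bundle becomes $X_2$. *)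

theory Defs
  imports Main "HOL.Real"
begin

definition Val :: "('a \<Rightarrow> 'c \<Rightarrow> real) \<Rightarrow> 'a \<Rightarrow> 'c set \<Rightarrow> real" where
  "Val v i S = (\<Sum>j\<in>S. v i j)"

definition chore_instance ::
  "'a set \<Rightarrow> 'c set \<Rightarrow> ('a \<Rightarrow> 'c \<Rightarrow> real) \<Rightarrow> ('a \<Rightarrow> real) \<Rightarrow> bool" where
  "chore_instance N M v s \<longleftrightarrow>
     finite N \<and> N \<noteq> {} \<and> finite M \<and>
     (\<forall>i\<in>N. \<forall>j\<in>M. v i j \<le> 0) \<and>
     (\<forall>i\<in>N. Val v i M = -1) \<and>
     (\<forall>i\<in>N. 0 < s i \<and> s i \<le> 1) \<and>
     (\<Sum>i\<in>N. s i) = 1"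

definition allocations :: "'a set \<Rightarrow> 'c set \<Rightarrow> ('a \<Rightarrow> 'c set) set" where
  "allocations N M =
     {Y. (\<forall>k\<in>N. \<forall>l\<in>N. k \<noteq> l \<longrightarrow> Y k \<inter> Y l = {}) \<and>
         (\<Union>k\<in>N. Y k) = M \<and> (\<forall>k. k \<notin> N \<longrightarrow> Y k = {})}"

definition wval ::
  "'a set \<Rightarrow> ('a \<Rightarrow> 'c \<Rightarrow> real) \<Rightarrow> ('a \<Rightarrow> real) \<Rightarrow> 'a \<Rightarrow> ('a \<Rightarrow> 'c set) \<Rightarrow> real" where
  "wval N v s i Y = Min ((\<lambda>k. Val v i (Y k) * (s i / s k)) ` N)"

definition WMMS ::
  "'a set \<Rightarrow> 'c set \<Rightarrow> ('a \<Rightarrow> 'c \<Rightarrow> real) \<Rightarrow> ('a \<Rightarrow> real) \<Rightarrow> 'a \<Rightarrow> real" where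
  "WMMS N M v s i = Max (wval N v s i ` allocations N M)"

definition P_partition ::
  "'a set \<Rightarrow> 'c set \<Rightarrow> ('a \<Rightarrow> 'c \<Rightarrow> real) \<Rightarrow> ('a \<Rightarrow> real) \<Rightarrow> 'a \<Rightarrow> ('a \<Rightarrow> 'c set) \<Rightarrow> bool" where
  "P_partition N M v s i Y \<longleftrightarrow> Y \<in> allocations N M \<and> wval N v s i Y = WMMS N M v s i"

definition OWMMS_ratio ::
  "'a set \<Rightarrow> 'c set \<Rightarrow> ('a \<Rightarrow> 'c \<Rightarrow> real) \<Rightarrow> ('a \<Rightarrow> real) \<Rightarrow> real" where
  "OWMMS_ratio N M v s =
     Inf {\<alpha>. 1 \<le> \<alpha> \<and> (\<exists>X\<in>allocations N M. \<forall>i\<in>N. Val v i (X i) \<ge> \<alpha> * WMMS N M v s i)}"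

definition OWMMS ::
  "'a set \<Rightarrow> 'c set \<Rightarrow> ('a \<Rightarrow> 'c \<Rightarrow> real) \<Rightarrow> ('a \<Rightarrow> real) \<Rightarrow> 'a \<Rightarrow> real" where
  "OWMMS N M v s i = OWMMS_ratio N M v s * WMMS N M v s i"

text \<open>Algorithm DivCho for agents 1 and 2 (with s 1 \<le> s 2). The algorithm is
nondeterministic (choice of P-2 partition, tie-breaking of agent 1), so we describe
the set of its possible outputs X1, X2.\<close>

definition DivCho_output ::
  "'c set \<Rightarrow> (nat \<Rightarrow> 'c \<Rightarrow> real) \<Rightarrow> (nat \<Rightarrow> real) \<Rightarrow> 'c set \<Rightarrow> 'c set \<Rightarrow> bool" where
  "DivCho_output M v s X1 X2 \<longleftrightarrow>
     (if s 1 \<le> 1/3 \<and> s 2 \<ge> 2/3 then X1 = {} \<and> X2 = M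
      else (\<exists>A. P_partition {1,2} M v s 2 A \<and>
              ((X1 = A 1 \<and> X2 = A 2 \<and> Val v 1 (A 1) \<ge> Val v 1 (A 2)) \<or>
               (X1 = A 2 \<and> X2 = A 1 \<and> Val v 1 (A 2) \<ge> Val v 1 (A 1)))))"

end

theory Submission
  imports Defs
begin

text \<open>Every agent's WMMS is nonpositive, and since the bundles of any allocation
add up to V_i(M) = -1 while the shares add up to 1, some bundle k has
V_i(Y_k) \<le> -s_k; hence WMMS_i \<le> -s_i. If s_1 \<le> 1/3 and s_2 \<ge> 2/3, agent 2
takes all chores and V_2(M) = -1 \<ge> 3/2 (-s_2). Otherwise s_1 > 1/3, so
3/2 WMMS_1 < -1/2, while agent 1 chooses the better of two bundles worth -1 in
total. Agent 2 has the larger share, so each bundle of her P-2 partition is worth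
at least WMMS_2 to her. Finally, DivCho itself witnesses the ratio 3/2, so the
infimum defining the OWMMS ratio is over a nonempty set and is at least 1.\<close>

lemma allocation_subset:
  assumes "Y \<in> allocations N M" "k \<in> N"
  shows "Y k \<subseteq> M"
  using assms unfolding allocations_def by auto

lemma finite_allocations:
  assumes "finite N" "finite M"
  shows "finite (allocations N M)"
proof (rule finite_subset)
  show "allocations N M \<subseteq> {Y. \<forall>k. (k \<in> N \<longrightarrow> Y k \<in> Pow M) \<and> (k \<notin> N \<longrightarrow> Y k = {})}"
    unfolding allocations_def by auto
  show "finite {Y. \<forall>k. (k \<in> N \<longrightarrow> Y k \<in> Pow M) \<and> (k \<notin> N \<longrightarrow> Y k = {})}"
    using assms by (intro finite_set_of_finite_funs) auto
qed

lemma allocation_to_single_agent: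
  assumes "a \<in> N"
  shows "(\<lambda>k. if k = a then M else {}) \<in> allocations N M"
  using assms unfolding allocations_def by auto

lemma allocation_of_two_bundles:
  assumes "X1 \<inter> X2 = {}" "X1 \<union> X2 = M"
  shows "(\<lambda>k::nat. if k = 1 then X1 else if k = 2 then X2 else {}) \<in> allocations {1,2} M"
  using assms unfolding allocations_def by auto

lemma allocation_two_agents:
  assumes "Y \<in> allocations {1::nat,2} M"
  shows "Y 1 \<inter> Y 2 = {}" "Y 1 \<union> Y 2 = M"
  using assms unfolding allocations_def by auto

lemma Val_nonpos:
  assumes "\<forall>j\<in>M. v i j \<le> 0" "S \<subseteq> M"
  shows "Val v i S \<le> 0"
  unfolding Val_def using assms by (meson subsetD sum_nonpos)

lemma sum_Val_allocation:
  assumes "finite N" "finite M" "Y \<in> allocations N M"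
  shows "(\<Sum>k\<in>N. Val v i (Y k)) = Val v i M"
proof -
  have "M = (\<Union>k\<in>N. Y k)" and "\<forall>k\<in>N. \<forall>l\<in>N. k \<noteq> l \<longrightarrow> Y k \<inter> Y l = {}"
    using assms(3) unfolding allocations_def by auto
  moreover have "\<forall>k\<in>N. finite (Y k)"
    using allocation_subset[OF assms(3)] assms(2) finite_subset by blast
  ultimately show ?thesis
    unfolding Val_def using assms(1) by (simp add: sum.UNION_disjoint)
qed

lemma Val_two_bundles:
  assumes "finite M" "Y \<in> allocations {1::nat,2} M"
  shows "Val v i (Y 1) + Val v i (Y 2) = Val v i M"
  using sum_Val_allocation[OF _ assms(1,2), of v i] by simp

lemma wval_le_bundle:
  assumes "finite N" "k \<in> N"
  shows "wval N v s i Y \<le> Val v i (Y k) * (s i / s k)"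
  unfolding wval_def using assms by (intro Min_le) auto

lemma WMMS_attained:
  assumes "finite N" "N \<noteq> {}" "finite M"
  obtains Y where "Y \<in> allocations N M" "wval N v s i Y = WMMS N M v s i"
proof -
  obtain a where "a \<in> N" using assms(2) by blast
  then have "allocations N M \<noteq> {}" using allocation_to_single_agent[of a N M] by blast
  then have "WMMS N M v s i \<in> wval N v s i ` allocations N M"
    unfolding WMMS_def using finite_allocations[OF assms(1,3)] by (intro Max_in) simp_all
  then obtain Y where "Y \<in> allocations N M" "WMMS N M v s i = wval N v s i Y" by blast
  then show ?thesis using that by simp
qed

lemma WMMS_nonpos:
  assumes "chore_instance N M v s" "i \<in> N"
  shows "WMMS N M v s i \<le> 0"
proof -
  note inst = assms(1)[unfolded chore_instance_def]
  have "finite N" "N \<noteq> {}" "finite M" using inst by auto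
  then obtain Y where Y: "Y \<in> allocations N M" "wval N v s i Y = WMMS N M v s i"
    by (rule WMMS_attained)
  have "wval N v s i Y \<le> Val v i (Y i) * (s i / s i)"
    using inst assms(2) by (intro wval_le_bundle) auto
  also have "\<dots> \<le> 0"
    using Val_nonpos[of M v i] allocation_subset[OF Y(1) assms(2)] inst assms(2) by simp
  finally show ?thesis using Y(2) by simp
qed

lemma WMMS_le_neg_share:
  assumes "chore_instance N M v s" "i \<in> N"
  shows "WMMS N M v s i \<le> - s i"
proof -
  note inst = assms(1)[unfolded chore_instance_def]
  have "finite N" "N \<noteq> {}" "finite M" using inst by auto
  then obtain Y where Y: "Y \<in> allocations N M" "wval N v s i Y = WMMS N M v s i"
    by (rule WMMS_attained)
  have "\<exists>k\<in>N. Val v i (Y k) \<le> - s k"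
  proof (rule ccontr)
    assume "\<not> ?thesis"
    then have "(\<Sum>k\<in>N. - s k) < (\<Sum>k\<in>N. Val v i (Y k))"
      using inst by (intro sum_strict_mono) auto
    moreover have "(\<Sum>k\<in>N. Val v i (Y k)) = -1"
      using sum_Val_allocation[OF _ _ Y(1), of v i] inst assms(2) by simp
    ultimately show False using inst by (simp add: sum_negf)
  qed
  then obtain k where k: "k \<in> N" "Val v i (Y k) \<le> - s k" by blast
  have "s k > 0" "s i > 0" using inst assms(2) k(1) by auto
  have "WMMS N M v s i \<le> Val v i (Y k) * (s i / s k)"
    using wval_le_bundle[of N k v s i Y] Y(2) inst k(1) by argo
  also have "\<dots> \<le> - s k * (s i / s k)"
    using k(2) \<open>s k > 0\<close> \<open>s i > 0\<close> by (intro mult_right_mono) auto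
  also have "\<dots> = - s i" using \<open>s k > 0\<close> by simp
  finally show ?thesis .
qed

lemma WMMS_le_bundle_of_P_partition:
  assumes "chore_instance N M v s" "i \<in> N" "k \<in> N" "s k \<le> s i"
    and "P_partition N M v s i A"
  shows "WMMS N M v s i \<le> Val v i (A k)"
proof -
  note inst = assms(1)[unfolded chore_instance_def]
  have A: "A \<in> allocations N M" "WMMS N M v s i = wval N v s i A"
    using assms(5) unfolding P_partition_def by auto
  have "s k > 0" using inst assms(3) by simp
  then have "1 \<le> s i / s k" using assms(4) by simp
  moreover have "Val v i (A k) \<le> 0"
    using Val_nonpos[of M v i] allocation_subset[OF A(1) assms(3)] inst assms(2) by simp
  ultimately have "Val v i (A k) * (s i / s k) \<le> Val v i (A k) * 1"
    by (rule mult_left_mono_neg)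
  moreover have "WMMS N M v s i \<le> Val v i (A k) * (s i / s k)"
    using wval_le_bundle[of N k v s i A] A(2) inst assms(3) by argo
  ultimately show ?thesis by simp
qed

lemma OWMMS_le_WMMS:
  assumes "chore_instance N M v s" "i \<in> N"
    and "\<alpha> \<ge> 1" "X \<in> allocations N M" "\<forall>k\<in>N. Val v k (X k) \<ge> \<alpha> * WMMS N M v s k"
  shows "OWMMS N M v s i \<le> WMMS N M v s i"
proof -
  have "1 \<le> OWMMS_ratio N M v s"
    unfolding OWMMS_ratio_def
  proof (rule cInf_greatest)
    show "{\<alpha>. 1 \<le> \<alpha> \<and> (\<exists>X\<in>allocations N M. \<forall>i\<in>N. \<alpha> * WMMS N M v s i \<le> Val v i (X i))} \<noteq> {}"
      using assms(3-5) by blast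
  qed simp
  then show ?thesis
    unfolding OWMMS_def using mult_right_mono_neg[OF _ WMMS_nonpos[OF assms(1,2)]] by force
qed

lemma DivCho_single_bundle_guarantee:
  fixes v :: "nat \<Rightarrow> 'c \<Rightarrow> real"
  assumes "chore_instance {1,2} M v s" "s 2 \<ge> 2/3"
  shows "Val v 1 {} \<ge> 3/2 * WMMS {1,2} M v s 1"
    and "Val v 2 M \<ge> 3/2 * WMMS {1,2} M v s 2"
proof -
  show "Val v 1 {} \<ge> 3/2 * WMMS {1,2} M v s 1"
    using WMMS_nonpos[OF assms(1)] by (simp add: Val_def)
  have "WMMS {1,2} M v s 2 \<le> - s 2" using WMMS_le_neg_share[OF assms(1)] by simp
  then show "Val v 2 M \<ge> 3/2 * WMMS {1,2} M v s 2"
    using assms unfolding chore_instance_def by simp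
qed

lemma DivCho_chooser_guarantee:
  fixes v :: "nat \<Rightarrow> 'c \<Rightarrow> real" and A :: "nat \<Rightarrow> 'c set"
  assumes "chore_instance {1,2} M v s" "s 1 > 1/3" "A \<in> allocations {1,2} M"
    and "Val v 1 X1 = max (Val v 1 (A 1)) (Val v 1 (A 2))"
  shows "Val v 1 X1 \<ge> 3/2 * WMMS {1,2} M v s 1"
proof -
  note inst = assms(1)[unfolded chore_instance_def]
  have "Val v 1 (A 1) + Val v 1 (A 2) = -1"
    using Val_two_bundles[OF _ assms(3), of v 1] inst by simp
  moreover have "WMMS {1,2} M v s 1 \<le> - s 1" using WMMS_le_neg_share[OF assms(1)] by simp
  ultimately show ?thesis using assms(2,4) by linarith
qed

lemma DivCho_output_guarantee:
  fixes v :: "nat \<Rightarrow> 'c \<Rightarrow> real"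
  assumes "chore_instance {1,2} M v s" "s 1 \<le> s 2" "DivCho_output M v s X1 X2"
  shows "X1 \<inter> X2 = {}" "X1 \<union> X2 = M"
    and "Val v 1 X1 \<ge> 3/2 * WMMS {1,2} M v s 1"
    and "Val v 2 X2 \<ge> 3/2 * WMMS {1,2} M v s 2"
proof -
  have shares: "s 1 + s 2 = 1" using assms(1) unfolding chore_instance_def by simp
  have "(X1 \<inter> X2 = {} \<and> X1 \<union> X2 = M) \<and> Val v 1 X1 \<ge> 3/2 * WMMS {1,2} M v s 1
      \<and> Val v 2 X2 \<ge> 3/2 * WMMS {1,2} M v s 2"
  proof (cases "s 1 \<le> 1/3 \<and> s 2 \<ge> 2/3")
    case True
    then have "X1 = {}" "X2 = M" using assms(3) unfolding DivCho_output_def by simp_all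
    then show ?thesis using DivCho_single_bundle_guarantee[OF assms(1)] True by simp
  next
    case False
    then have "s 1 > 1/3" using shares by auto
    from False assms(3) obtain A where PA: "P_partition {1,2} M v s 2 A" and
      choice: "(X1 = A 1 \<and> X2 = A 2 \<and> Val v 1 (A 1) \<ge> Val v 1 (A 2)) \<or>
               (X1 = A 2 \<and> X2 = A 1 \<and> Val v 1 (A 2) \<ge> Val v 1 (A 1))"
      unfolding DivCho_output_def by auto
    have A: "A \<in> allocations {1,2} M" using PA unfolding P_partition_def by simp
    have "Val v 1 X1 \<ge> 3/2 * WMMS {1,2} M v s 1"
      using DivCho_chooser_guarantee[OF assms(1) \<open>s 1 > 1/3\<close> A, of X1] choice by auto
    moreover obtain k where k: "k \<in> {1,2}" "X2 = A k" using choice by blast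
    have "s k \<le> s 2" using k(1) assms(2) by auto
    then have "WMMS {1,2} M v s 2 \<le> Val v 2 X2"
      using WMMS_le_bundle_of_P_partition[OF assms(1) _ k(1) _ PA] k(2) by simp
    then have "Val v 2 X2 \<ge> 3/2 * WMMS {1,2} M v s 2"
      using WMMS_nonpos[OF assms(1), of 2] by simp
    ultimately show ?thesis using choice allocation_two_agents[OF A] by auto
  qed
  then show "X1 \<inter> X2 = {}" "X1 \<union> X2 = M"
    "Val v 1 X1 \<ge> 3/2 * WMMS {1,2} M v s 1" "Val v 2 X2 \<ge> 3/2 * WMMS {1,2} M v s 2"
    by blast+
qed

theorem theorem2:
  fixes M :: "'c set" and v :: "nat \<Rightarrow> 'c \<Rightarrow> real" and s :: "nat \<Rightarrow> real"
    and X1 X2 :: "'c set"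
  assumes "chore_instance {1,2} M v s"
    and "s 1 \<le> s 2"
    and "DivCho_output M v s X1 X2"
  shows "Val v 1 X1 \<ge> 3/2 * WMMS {1,2} M v s 1
       \<and> 3/2 * WMMS {1,2} M v s 1 \<ge> 3/2 * OWMMS {1,2} M v s 1
       \<and> Val v 2 X2 \<ge> 3/2 * WMMS {1,2} M v s 2
       \<and> 3/2 * WMMS {1,2} M v s 2 \<ge> 3/2 * OWMMS {1,2} M v s 2"
proof -
  note guarantee = DivCho_output_guarantee[OF assms]
  define X where "X = (\<lambda>k::nat. if k = 1 then X1 else if k = 2 then X2 else {})"
  have X: "X \<in> allocations {1,2} M"
    unfolding X_def using guarantee(1,2) by (rule allocation_of_two_bundles)
  have achieves: "\<forall>k\<in>{1,2}. Val v k (X k) \<ge> 3/2 * WMMS {1,2} M v s k"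
    using guarantee(3,4) by (simp add: X_def)
  have "OWMMS {1,2} M v s i \<le> WMMS {1,2} M v s i" if "i \<in> {1,2}" for i
    by (rule OWMMS_le_WMMS[OF assms(1) that _ X achieves]) simp
  then show ?thesis using guarantee(3,4) by simp
qed

end
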